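(* Consider the system of ordinary differential equations, for $t\ge 0$, \begin{align*} \dot S &= \Lambda + \omega m Q - \big[\lambda(t)(1-p) + \phi p + \mu\big] S,\\ \dot A &= \lambda(t)(1-p) S - (q\upsilon+\mu) A,\\ \dot I &= q\upsilon A - (\delta_1+\mu) I,\\ \dot Q &= \phi p S + \delta_1 f_1 I + \delta_2(1-f_2-f_3) H - (\omega m+\mu) Q,\\ \dot H &= \delta_1(1-f_1) I + \eta(1-\kappa) H_{IC} - \big[\delta_2(1-f_2-f_3) + \delta_2 f_2 + \alpha_1 f_3 + \mu\big] H,\\ \dot H_{IC} &= \delta_2 f_2 H - \big[\eta(1-\kappa) + \alpha_2\kappa + \mu\big] H_{IC}, \end{align*} where $N(t)=S+A+I+Q+H+H_{IC}$ and $\lambda(t)=\beta\,[A(t)+I(t)+l_H H(t)]/N(t)$. Set $a_0=q\upsilon+\mu$, $a_1=\delta_1+\mu$, $a_2=m\omega+\mu$, $a_3=\delta_2(1-f_2-f_3)+\delta_2 f_2+\alpha_1 f_3+\mu$, $a_6=\delta_1(1-f_1)$, $\eta_\kappa=\eta(1-\kappa)$, $a_7=\alpha_2\kappa+\eta_\kappa+\mu$, $\chi=a_3a_7-\delta_2\eta_\kappa f_2$, and define $$R_0=\frac{\beta\, a_2\,(1-p)\Big[\big(l_H\, a_6\, q\upsilon+(a_1+q\upsilon)a_3\big)a_7-\delta_2\,\eta_\kappa\, f_2\,(q\upsilon+a_1)\Big]}{a_0\,a_1\,\chi\,(p\phi+a_2)}.$$ If $R_0>1$, then the system has a unique endemic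 equilibrium, i.e., a unique equilibrium $(S^*,A^*,I^*,Q^*,H^*,H_{IC}^* )$ whose force of infection $\lambda^*=\beta(A^*+I^*+l_H H^* )(1-p)/N^*$, with $N^*=S^*+A^*+I^*+Q^*+H^*+H_{IC}^*$, is strictly positive.
   Context: This is a compartmental COVID-19 model (susceptible $S$, asymptomatic infected $A$, symptomatic infected $I$, quarantined $Q$, hospitalized $H$, hospitalized in intensive care $H_{IC}$). All parameters are non-negative: $\Lambda>0$, $\mu>0$, $\beta>0$, $l_H>0$, $\phi,\upsilon,\delta_1,\delta_2,\eta,\omega,\alpha_1,\alpha_2>0$, and $p,q,f_1,f_2,f_3,\kappa,m\in[0,1]$ with $1-f_2-f_3\in[0,1]$. The relative transmissibility of class $A$ is taken equal to $1$. $R_0$ is called the basic reproduction number; an endemic equilibrium is an equilibrium of the system with strictly positive force of infection $\lambda^*$ (and $\chi>0$). *)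

theory Defs
  imports Complex_Main
begin

definition popN :: "real \<Rightarrow> real \<Rightarrow> real \<Rightarrow> real \<Rightarrow> real \<Rightarrow> real \<Rightarrow> real" where
  "popN S A I Q H HIC = S + A + I + Q + H + HIC"

definition covid_field ::
  "real \<Rightarrow> real \<Rightarrow> real \<Rightarrow> real \<Rightarrow> real \<Rightarrow> real \<Rightarrow> real \<Rightarrow> real \<Rightarrow> real \<Rightarrow> real \<Rightarrow>
   real \<Rightarrow> real \<Rightarrow> real \<Rightarrow> real \<Rightarrow> real \<Rightarrow> real \<Rightarrow> real \<Rightarrow> real \<Rightarrow> real \<Rightarrow>
   real \<times> real \<times> real \<times> real \<times> real \<times> real \<Rightarrow> real \<times> real \<times> real \<times> real \<times> real \<times> real" where
  "covid_field Lambda mu beta lH phi ups d1 d2 eta omega al1 al2 p q f1 f2 f3 kappa m x =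
    (case x of (S, A, I, Q, H, HIC) \<Rightarrow>
      (let lam = beta * (A + I + lH * H) / popN S A I Q H HIC in
       ( Lambda + omega * m * Q - (lam * (1 - p) + phi * p + mu) * S,
         lam * (1 - p) * S - (q * ups + mu) * A,
         q * ups * A - (d1 + mu) * I,
         phi * p * S + d1 * f1 * I + d2 * (1 - f2 - f3) * H - (omega * m + mu) * Q,
         d1 * (1 - f1) * I + eta * (1 - kappa) * HIC
           - (d2 * (1 - f2 - f3) + d2 * f2 + al1 * f3 + mu) * H,
         d2 * f2 * H - (eta * (1 - kappa) + al2 * kappa + mu) * HIC)))"

definition force_eq ::
  "real \<Rightarrow> real \<Rightarrow> real \<Rightarrow> real \<times> real \<times> real \<times> real \<times> real \<times> real \<Rightarrow> real" where
  "force_eq beta lH p x =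
    (case x of (S, A, I, Q, H, HIC) \<Rightarrow> beta * (A + I + lH * H) * (1 - p) / popN S A I Q H HIC)"

definition R0 ::
  "real \<Rightarrow> real \<Rightarrow> real \<Rightarrow> real \<Rightarrow> real \<Rightarrow> real \<Rightarrow> real \<Rightarrow> real \<Rightarrow> real \<Rightarrow> real \<Rightarrow>
   real \<Rightarrow> real \<Rightarrow> real \<Rightarrow> real \<Rightarrow> real \<Rightarrow> real \<Rightarrow> real \<Rightarrow> real \<Rightarrow> real \<Rightarrow> real" where
  "R0 Lambda mu beta lH phi ups d1 d2 eta omega al1 al2 p q f1 f2 f3 kappa m =
    (let a0 = q * ups + mu;
         a1 = d1 + mu;
         a2 = m * omega + mu;
         a3 = d2 * (1 - f2 - f3) + d2 * f2 + al1 * f3 + mu;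
         a6 = d1 * (1 - f1);
         etak = eta * (1 - kappa);
         a7 = al2 * kappa + etak + mu;
         chi = a3 * a7 - d2 * etak * f2
     in beta * a2 * (1 - p) * ((lH * a6 * q * ups + (a1 + q * ups) * a3) * a7
                              - d2 * etak * f2 * (q * ups + a1))
        / (a0 * a1 * chi * (p * phi + a2)))"

definition endemic_equilibrium ::
  "real \<Rightarrow> real \<Rightarrow> real \<Rightarrow> real \<Rightarrow> real \<Rightarrow> real \<Rightarrow> real \<Rightarrow> real \<Rightarrow> real \<Rightarrow> real \<Rightarrow>
   real \<Rightarrow> real \<Rightarrow> real \<Rightarrow> real \<Rightarrow> real \<Rightarrow> real \<Rightarrow> real \<Rightarrow> real \<Rightarrow> real \<Rightarrow>
   real \<times> real \<times> real \<times> real \<times> real \<times> real \<Rightarrow> bool" where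
  "endemic_equilibrium Lambda mu beta lH phi ups d1 d2 eta omega al1 al2 p q f1 f2 f3 kappa m x \<longleftrightarrow>
    (case x of (S, A, I, Q, H, HIC) \<Rightarrow> S \<ge> 0 \<and> A \<ge> 0 \<and> I \<ge> 0 \<and> Q \<ge> 0 \<and> H \<ge> 0 \<and> HIC \<ge> 0) \<and>
    covid_field Lambda mu beta lH phi ups d1 d2 eta omega al1 al2 p q f1 f2 f3 kappa m x
      = (0, 0, 0, 0, 0, 0) \<and>
    force_eq beta lH p x > 0"

end

theory Submission
  imports Defs
begin

text \<open>For a fixed force of infection \<open>L\<close> the equilibrium equations are linear in the
  compartments; they have the single solution \<open>equilibrium_profile S L\<close> with
  \<open>S = \<Lambda> / D L\<close>.  Feeding this profile back into the definition of the force of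
  infection gives \<open>L = L K / (G + M L)\<close>, so a positive \<open>L\<close> must be \<open>(K - G) / M\<close>, which is
  positive exactly when \<open>R\<^sub>0 = K / G\<close> exceeds 1.\<close>

locale covid_params =
  fixes Lambda mu beta lH phi ups d1 d2 eta omega al1 al2 p q f1 f2 f3 kappa m :: real
  assumes Lambda_pos: "Lambda > 0" and mu_pos: "mu > 0"
    and nonneg: "phi \<ge> 0" "p \<ge> 0" "ups \<ge> 0" "q \<ge> 0" "d1 \<ge> 0" "d2 \<ge> 0" "eta \<ge> 0"
      "omega \<ge> 0" "m \<ge> 0" "al1 \<ge> 0" "al2 \<ge> 0" "f1 \<ge> 0" "f2 \<ge> 0" "f3 \<ge> 0" "kappa \<ge> 0"
    and f1_le_1: "f1 \<le> 1" and f2_f3_le_1: "f2 + f3 \<le> 1" and kappa_le_1: "kappa \<le> 1"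
begin

definition "a0 = q * ups + mu"
definition "a1 = d1 + mu"
definition "a2 = omega * m + mu"
definition "a3 = d2 * (1 - f2 - f3) + d2 * f2 + al1 * f3 + mu"
definition "a6 = d1 * (1 - f1)"
definition "etak = eta * (1 - kappa)"
definition "a7 = al2 * kappa + etak + mu"
definition "chi = a3 * a7 - d2 * etak * f2"

text \<open>At an equilibrium with incidence \<open>J = L S\<close> (\<open>L\<close> the force of infection) the
  equations for \<open>A, I, H, H\<^sub>I\<^sub>C, Q\<close> are linear and give \<open>A = J / a0\<close>, \<open>I = kI J\<close>,
  \<open>H = kH J\<close>, \<open>H\<^sub>I\<^sub>C = kC J\<close> and \<open>a2 Q = \<phi> p S + cQ J\<close>.  Hence
  \<open>A + I + lH H = B0 J\<close>, \<open>N = S (G + M L)\<close>, and the \<open>S\<close>-equation reads \<open>\<Lambda> = S D(L)\<close>.\<close>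

definition "kI = q * ups / (a0 * a1)"
definition "kH = a6 * a7 * kI / chi"
definition "kC = d2 * f2 * kH / a7"
definition "cQ = d1 * f1 * kI + d2 * (1 - f2 - f3) * kH"
definition "B0 = 1 / a0 + kI + lH * kH"
definition "M = 1 / a0 + kI + kH + kC + cQ / a2"
definition "G = 1 + phi * p / a2"
definition "K = beta * (1 - p) * B0"
definition "E = 1 - omega * m * cQ / a2"
definition "D L = L * E + mu * G"

definition equilibrium_profile :: "real \<Rightarrow> real \<Rightarrow> real \<times> real \<times> real \<times> real \<times> real \<times> real" where
  "equilibrium_profile S L =
    (S, S * L / a0, S * L * kI, S * (phi * p + L * cQ) / a2, S * L * kH, S * L * kC)"

lemma a0_pos: "a0 > 0" and a1_pos: "a1 > 0" and a2_pos: "a2 > 0"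
  and a6_nonneg: "a6 \<ge> 0" and a7_pos: "a7 > 0"
  using mu_pos nonneg f1_le_1 kappa_le_1
  by (auto simp: a0_def a1_def a2_def a6_def etak_def a7_def intro!: add_nonneg_pos)

lemma chi_decomposition:
  "chi = d2 * (1 - f2 - f3) * a7 + d2 * f2 * (al2 * kappa + mu) + (al1 * f3 + mu) * a7"
  by (simp add: chi_def a3_def a7_def algebra_simps)

lemma chi_pos: "chi > 0"
  unfolding chi_decomposition using a7_pos mu_pos nonneg f2_f3_le_1
  by (intro add_nonneg_pos add_nonneg_nonneg mult_pos_pos) auto

lemma chi_ge: "d2 * (1 - f2 - f3) * a7 \<le> chi"
  unfolding chi_decomposition using a7_pos mu_pos nonneg by simp

lemma kI_nonneg: "kI \<ge> 0" and kH_nonneg: "kH \<ge> 0" and kC_nonneg: "kC \<ge> 0"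
  and cQ_nonneg: "cQ \<ge> 0"
  using a0_pos a1_pos a6_nonneg a7_pos chi_pos nonneg f2_f3_le_1
  by (auto simp: kI_def kH_def kC_def cQ_def)

lemma M_pos: "M > 0" and G_pos: "G > 0"
  using a0_pos a2_pos kI_nonneg kH_nonneg kC_nonneg cQ_nonneg nonneg
  by (auto simp: M_def G_def intro!: add_pos_nonneg)

text \<open>\<open>cQ\<close> is the fraction of new infections that eventually enter \<open>Q\<close>.\<close>

lemma cQ_le_1: "cQ \<le> 1"
proof -
  have "d2 * (1 - f2 - f3) * kH = (d2 * (1 - f2 - f3) * a7 / chi) * (a6 * kI)"
    by (simp add: kH_def)
  also have "\<dots> \<le> a6 * kI"
    using chi_ge chi_pos a6_nonneg kI_nonneg a7_pos nonneg f2_f3_le_1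
    by (intro mult_left_le_one_le) auto
  finally have "cQ \<le> d1 * kI"
    by (simp add: cQ_def a6_def algebra_simps)
  also have "d1 * kI \<le> d1 / a1"
    using a0_pos a1_pos nonneg mu_pos
    by (simp add: kI_def a0_def divide_simps mult_left_mono)
  also have "\<dots> \<le> 1"
    using a1_pos mu_pos by (simp add: a1_def)
  finally show ?thesis .
qed

lemma D_pos: "L \<ge> 0 \<Longrightarrow> D L > 0"
proof -
  assume "L \<ge> 0"
  have "omega * m * cQ \<le> omega * m"
    using cQ_le_1 cQ_nonneg nonneg by (simp add: mult_left_le)
  then have "E > 0"
    using a2_pos mu_pos by (simp add: E_def a2_def)
  then show "D L > 0"
    using \<open>L \<ge> 0\<close> mu_pos G_pos by (simp add: D_def add_nonneg_pos)
qed

lemma covid_field_eq_0_iff: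
  assumes "force_eq beta lH p (S, A, I, Q, H, C) = L"
  shows "covid_field Lambda mu beta lH phi ups d1 d2 eta omega al1 al2 p q f1 f2 f3 kappa m
      (S, A, I, Q, H, C) = (0, 0, 0, 0, 0, 0) \<longleftrightarrow>
    Lambda + omega * m * Q = (L + phi * p + mu) * S \<and> L * S = a0 * A \<and> q * ups * A = a1 * I \<and>
    phi * p * S + d1 * f1 * I + d2 * (1 - f2 - f3) * H = a2 * Q \<and>
    a6 * I + etak * C = a3 * H \<and> d2 * f2 * H = a7 * C"
proof -
  have "beta * (A + I + lH * H) / popN S A I Q H C * (1 - p) = L"
    using assms by (simp add: force_eq_def)
  then show ?thesis
    unfolding covid_field_def Let_def prod.case prod.inject right_minus_eq
    by (simp add: a0_def a1_def a2_def a3_def a6_def etak_def a7_def add_ac)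
qed

lemma kH_chi: "kH * chi = a6 * a7 * kI"
  using chi_pos by (simp add: kH_def)

lemma kC_a7: "kC * a7 = d2 * f2 * kH"
  using a7_pos by (simp add: kC_def)

lemma S_equation_profile:
  "Lambda + omega * m * (S * (phi * p + L * cQ) / a2) - (L + phi * p + mu) * S = Lambda - S * D L"
proof -
  have "Lambda + omega * m * (S * (phi * p + L * cQ) / a2) - (L + phi * p + mu) * S
      - (Lambda - S * D L) = S * phi * p * ((omega * m + mu) / a2 - 1)"
    using a2_pos by (simp add: D_def E_def G_def field_simps)
  also have "\<dots> = 0"
    using a2_pos by (simp add: a2_def)
  finally show ?thesis
    by (simp only: right_minus_eq)
qed

lemma equilibrium_equations_iff_profile:
  "(Lambda + omega * m * Q = (L + phi * p + mu) * S \<and> L * S = a0 * A \<and> q * ups * A = a1 * I \<and>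
    phi * p * S + d1 * f1 * I + d2 * (1 - f2 - f3) * H = a2 * Q \<and>
    a6 * I + etak * C = a3 * H \<and> d2 * f2 * H = a7 * C) \<longleftrightarrow>
   (S, A, I, Q, H, C) = equilibrium_profile S L \<and> S * D L = Lambda"
    (is "?equations \<longleftrightarrow> ?profile")
proof
  assume ?equations
  then have eqs: "Lambda + omega * m * Q = (L + phi * p + mu) * S" "L * S = a0 * A"
    "q * ups * A = a1 * I" "phi * p * S + d1 * f1 * I + d2 * (1 - f2 - f3) * H = a2 * Q"
    "a6 * I + etak * C = a3 * H" "d2 * f2 * H = a7 * C"
    by auto
  have A: "A = S * L / a0"
    using eqs(2) a0_pos by (simp add: field_simps)
  have I: "I = S * L * kI"
    using eqs(3) a0_pos a1_pos by (simp add: A kI_def field_simps)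
  have "chi * H = a6 * a7 * I"
    using arg_cong[OF eqs(5), of "(*) a7"] eqs(6)
    by (simp add: chi_def algebra_simps) (metis mult.commute mult.left_commute)
  then have H: "H = S * L * kH"
    using chi_pos by (simp add: I kH_def field_simps)
  have C: "C = S * L * kC"
    using eqs(6) a7_pos by (simp add: H kC_def field_simps)
  have Q: "Q = S * (phi * p + L * cQ) / a2"
    using eqs(4) a2_pos by (simp add: I H cQ_def field_simps)
  have "S * D L = Lambda"
    using eqs(1) S_equation_profile[of S L] by (simp add: Q)
  then show ?profile
    by (simp add: equilibrium_profile_def A I Q H C)
next
  assume ?profile
  then have x: "A = S * L / a0" "I = S * L * kI" "Q = S * (phi * p + L * cQ) / a2"
      "H = S * L * kH" "C = S * L * kC" and S: "S * D L = Lambda"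
    by (auto simp: equilibrium_profile_def)
  have "a6 * kI + etak * kC = a3 * kH"
  proof -
    have "a7 * (a6 * kI + etak * kC) = a7 * (a3 * kH)"
      using kH_chi kC_a7 by (simp add: chi_def algebra_simps)
    then show ?thesis
      using a7_pos by simp
  qed
  then have "a6 * I + etak * C = a3 * H"
    by (simp add: x algebra_simps) (metis mult.assoc distrib_left)
  moreover have "d2 * f2 * H = a7 * C"
    using kC_a7 by (simp add: x algebra_simps)
  moreover have "Lambda + omega * m * Q = (L + phi * p + mu) * S"
    using S S_equation_profile[of S L] by (simp add: x)
  ultimately show ?equations
    using a0_pos a1_pos a2_pos by (simp add: x kI_def cQ_def field_simps)
qed

lemma covid_field_eq_0_iff_profile:
  assumes "force_eq beta lH p x = L"
  shows "covid_field Lambda mu beta lH phi ups d1 d2 eta omega al1 al2 p q f1 f2 f3 kappa m x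
      = (0, 0, 0, 0, 0, 0) \<longleftrightarrow> x = equilibrium_profile (fst x) L \<and> fst x * D L = Lambda"
proof (cases x)
  case (fields S A I Q H C)
  then show ?thesis
    using covid_field_eq_0_iff[of S A I Q H C L] assms equilibrium_equations_iff_profile by simp
qed

lemma force_eq_profile:
  assumes "S > 0"
  shows "force_eq beta lH p (equilibrium_profile S L) = L * K / (G + L * M)"
proof -
  let ?x = "equilibrium_profile S L"
  have "case ?x of (S, A, I, Q, H, C) \<Rightarrow> popN S A I Q H C = S * (G + L * M)"
    using a0_pos a2_pos by (simp add: equilibrium_profile_def popN_def G_def M_def field_simps)
  moreover have "case ?x of (S, A, I, Q, H, C) \<Rightarrow> A + I + lH * H = S * L * B0"
    using a0_pos by (simp add: equilibrium_profile_def B0_def field_simps)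
  ultimately have "force_eq beta lH p ?x = beta * (S * L * B0) * (1 - p) / (S * (G + L * M))"
    by (simp add: force_eq_def equilibrium_profile_def)
  also have "\<dots> = L * K / (G + L * M)"
    using assms by (simp add: K_def)
  finally show ?thesis .
qed

definition "lambda_star = (K - G) / M"
definition "S_star = Lambda / D lambda_star"

lemma endemic_equilibrium_iff:
  "endemic_equilibrium Lambda mu beta lH phi ups d1 d2 eta omega al1 al2 p q f1 f2 f3 kappa m x
    \<longleftrightarrow> lambda_star > 0 \<and> x = equilibrium_profile S_star lambda_star"
proof
  assume endemic: "endemic_equilibrium Lambda mu beta lH phi ups d1 d2 eta omega al1 al2 p q f1 f2 f3
    kappa m x"
  obtain S A I Q H C where x: "x = (S, A, I, Q, H, C)"
    by (cases x) auto
  define L where "L = force_eq beta lH p x"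
  have L_pos: "L > 0"
    using endemic by (simp add: endemic_equilibrium_def L_def)
  have profile: "x = equilibrium_profile S L" and S_balance: "S * D L = Lambda"
    using endemic covid_field_eq_0_iff_profile[OF L_def[symmetric]]
    by (auto simp: endemic_equilibrium_def x)
  have S_pos: "S > 0"
    using S_balance D_pos[of L] Lambda_pos zero_less_mult_pos2[of S "D L"] L_pos by simp
  have "L = L * K / (G + L * M)"
    using force_eq_profile[OF S_pos, of L] unfolding profile[symmetric] L_def[symmetric] .
  moreover have "G + L * M > 0"
    using G_pos M_pos L_pos by (simp add: add_pos_nonneg)
  ultimately have "L * (G + L * M) = L * K"
    by (simp add: field_simps)
  then have "G + L * M = K"
    using L_pos by simp
  then have L_eq: "L = lambda_star"
    using M_pos by (simp add: lambda_star_def field_simps)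
  then have "S = S_star"
    using S_balance D_pos[of L] L_pos by (simp add: S_star_def field_simps)
  then show "lambda_star > 0 \<and> x = equilibrium_profile S_star lambda_star"
    using profile L_pos L_eq by simp
next
  assume "lambda_star > 0 \<and> x = equilibrium_profile S_star lambda_star"
  then have L_pos: "lambda_star > 0" and x: "x = equilibrium_profile S_star lambda_star"
    by auto
  have S_balance: "S_star * D lambda_star = Lambda"
    using D_pos[of lambda_star] L_pos by (simp add: S_star_def)
  have S_pos: "S_star > 0"
    using D_pos[of lambda_star] L_pos Lambda_pos by (simp add: S_star_def)
  have K_eq: "G + lambda_star * M = K"
    using M_pos by (simp add: lambda_star_def)
  have "K > 0"
    using K_eq G_pos M_pos L_pos by (metis add_pos_pos mult_pos_pos)
  then have force: "force_eq beta lH p x = lambda_star"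
    using force_eq_profile[OF S_pos, of lambda_star] by (simp add: x K_eq)
  have "covid_field Lambda mu beta lH phi ups d1 d2 eta omega al1 al2 p q f1 f2 f3 kappa m x
      = (0, 0, 0, 0, 0, 0)"
    using covid_field_eq_0_iff_profile[OF force] S_balance by (simp add: x equilibrium_profile_def)
  moreover have "case x of (S, A, I, Q, H, C) \<Rightarrow>
      S \<ge> 0 \<and> A \<ge> 0 \<and> I \<ge> 0 \<and> Q \<ge> 0 \<and> H \<ge> 0 \<and> C \<ge> 0"
    using S_pos L_pos a0_pos a2_pos kI_nonneg kH_nonneg kC_nonneg cQ_nonneg nonneg
    by (simp add: x equilibrium_profile_def)
  ultimately show "endemic_equilibrium Lambda mu beta lH phi ups d1 d2 eta omega al1 al2 p q f1 f2 f3
    kappa m x"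
    using force L_pos by (simp add: endemic_equilibrium_def)
qed

lemma R0_eq: "R0 Lambda mu beta lH phi ups d1 d2 eta omega al1 al2 p q f1 f2 f3 kappa m = K / G"
proof -
  have "R0 Lambda mu beta lH phi ups d1 d2 eta omega al1 al2 p q f1 f2 f3 kappa m
      = beta * a2 * (1 - p) * ((lH * a6 * q * ups + (a1 + q * ups) * a3) * a7
          - d2 * etak * f2 * (q * ups + a1)) / (a0 * a1 * chi * (p * phi + a2))"
    using a2_def
    unfolding R0_def Let_def a0_def[symmetric] a1_def[symmetric] a3_def[symmetric]
      a6_def[symmetric] etak_def[symmetric] a7_def[symmetric] chi_def[symmetric]
    by (simp add: mult.commute[of m omega])
  also have "\<dots> = beta * a2 * (1 - p) * (lH * a6 * q * ups * a7 + (a1 + q * ups) * chi)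
      / (a0 * a1 * chi * (p * phi + a2))"
    by (simp add: chi_def algebra_simps)
  also have "\<dots> = K / G"
  proof -
    have "B0 = (lH * a6 * q * ups * a7 + (a1 + q * ups) * chi) / (a0 * a1 * chi)"
      using a0_pos a1_pos chi_pos by (simp add: B0_def kH_def kI_def field_simps)
    moreover have "G = (p * phi + a2) / a2"
      using a2_pos by (simp add: G_def field_simps)
    moreover have "p * phi + a2 > 0"
      using a2_pos nonneg by (simp add: add_nonneg_pos)
    ultimately show ?thesis
      using a2_pos by (simp add: K_def)
  qed
  finally show ?thesis .
qed

end

theorem mainTheorem3:
  fixes Lambda mu beta lH phi ups d1 d2 eta omega al1 al2 p q f1 f2 f3 kappa m :: real
  assumes "Lambda > 0" "mu > 0" "beta > 0" "lH > 0"
    and "phi > 0" "ups > 0" "d1 > 0" "d2 > 0" "eta > 0" "omega > 0" "al1 > 0" "al2 > 0"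
    and "0 \<le> p" "p \<le> 1" "0 \<le> q" "q \<le> 1" "0 \<le> f1" "f1 \<le> 1" "0 \<le> f2" "f2 \<le> 1"
    and "0 \<le> f3" "f3 \<le> 1" "0 \<le> kappa" "kappa \<le> 1" "0 \<le> m" "m \<le> 1"
    and "0 \<le> 1 - f2 - f3" "1 - f2 - f3 \<le> 1"
    and "R0 Lambda mu beta lH phi ups d1 d2 eta omega al1 al2 p q f1 f2 f3 kappa m > 1"
  shows "\<exists>!x. endemic_equilibrium Lambda mu beta lH phi ups d1 d2 eta omega al1 al2 p q f1 f2 f3 kappa m x"
proof -
  interpret covid_params Lambda mu beta lH phi ups d1 d2 eta omega al1 al2 p q f1 f2 f3 kappa m
    using assms by unfold_locales auto
  have "K / G > 1"
    using assms(29) by (simp add: R0_eq)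
  then have "lambda_star > 0"
    using G_pos M_pos by (simp add: lambda_star_def field_simps)
  then show ?thesis
    using endemic_equilibrium_iff by auto
qed

end
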